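(* Let $G$ be a countable vertex set and let $c,b$ be conductance functions on $G$ with $b_{xy}\le c_{xy}$ for all $x,y$, such that $(G,c)$ and $(G,b)$ are connected locally finite networks. Let $\mathcal I:\mathcal H_{\mathcal E_c}\to\mathcal H_{\mathcal E_b}$ be the inclusion map and $\mathcal I^*:\mathcal H_{\mathcal E_b}\to\mathcal H_{\mathcal E_c}$ its Hilbert-space adjoint. Then $\mathcal I(\mathrm{Fin}_c)\subseteq \mathrm{Fin}_b$ and $\mathcal I^*(\mathrm{Harm}_b)\subseteq \mathrm{Harm}_c$.
   Context: A conductance function on a countable set $G$ is a symmetric map $c:G\times G\to[0,\infty)$ with $c_{xx}=0$; $x\sim y$ iff $c_{xy}>0$; locally finite means finitely many neighbours per vertex; connected means any two vertices are joined by a finite path of adjacent vertices. The energy is $\mathcal E_c(u,v)=\frac12\sum_{x,y}c_{xy}\overline{(u(x)-u(y))}(v(x)-v(y))$, and $\mathcal H_{\mathcal E_c}$ is the space of functions $u:G\to\mathbb C$ with $\mathcal E_c(u)<\infty$ modulo constants, with inner product $\mathcal E_c(u,v)$ (a Hilbert space). The Laplacian is $(\Delta_c v)(x)=\sum_{y\sim x}c_{xy}(v(x)-v(y))$. $\delta_x$ denotes the indicator of $\{x\}$ (an element of $\mathcal H_{\mathcal E_c}$), $\mathrm{Fin}_c$ is the closure in $\mathcal H_{\mathcal E_c}$ of $\mathrm{span}\{\delta_x\}_{x\in G}$, and $\mathrm{Harm}_c=\{v\in\mathcal H_{\mathcal E_c}:\Delta_c v(x)=0\ \forall x\in G\}$.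 Analogous notation with $b$ in place of $c$. *)

theory Defs
  imports "HOL-Analysis.Analysis"
begin

definition conductance :: "('a \<Rightarrow> 'a \<Rightarrow> real) \<Rightarrow> bool" where
  "conductance c \<longleftrightarrow> (\<forall>x y. c x y = c y x) \<and> (\<forall>x y. 0 \<le> c x y) \<and> (\<forall>x. c x x = 0)"

definition adj :: "('a \<Rightarrow> 'a \<Rightarrow> real) \<Rightarrow> 'a \<Rightarrow> 'a \<Rightarrow> bool" where
  "adj c x y \<longleftrightarrow> c x y > 0"

definition locally_finite :: "('a \<Rightarrow> 'a \<Rightarrow> real) \<Rightarrow> bool" where
  "locally_finite c \<longleftrightarrow> (\<forall>x. finite {y. adj c x y})"

definition connected_net :: "('a \<Rightarrow> 'a \<Rightarrow> real) \<Rightarrow> bool" where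
  "connected_net c \<longleftrightarrow> (\<forall>x y. (adj c)\<^sup>*\<^sup>* x y)"

definition finite_energy :: "('a \<Rightarrow> 'a \<Rightarrow> real) \<Rightarrow> ('a \<Rightarrow> complex) \<Rightarrow> bool" where
  "finite_energy c u \<longleftrightarrow> (\<lambda>(x, y). c x y * (cmod (u x - u y))\<^sup>2) summable_on UNIV"

definition energy :: "('a \<Rightarrow> 'a \<Rightarrow> real) \<Rightarrow> ('a \<Rightarrow> complex) \<Rightarrow> ('a \<Rightarrow> complex) \<Rightarrow> complex" where
  "energy c u v = (1/2) * (\<Sum>\<^sub>\<infinity>(x, y). complex_of_real (c x y) * cnj (u x - u y) * (v x - v y))"

text \<open>Fin_c: closure in H_E of span of the deltas (= finitely supported functions; constants
  have zero energy, so working modulo constants changes nothing).\<close>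
definition Fin :: "('a \<Rightarrow> 'a \<Rightarrow> real) \<Rightarrow> ('a \<Rightarrow> complex) set" where
  "Fin c = {u. finite_energy c u \<and>
     (\<forall>\<epsilon>>0. \<exists>v. finite {x. v x \<noteq> 0} \<and> finite_energy c (\<lambda>x. u x - v x) \<and>
        Re (energy c (\<lambda>x. u x - v x) (\<lambda>x. u x - v x)) < \<epsilon>)}"

definition laplacian :: "('a \<Rightarrow> 'a \<Rightarrow> real) \<Rightarrow> ('a \<Rightarrow> complex) \<Rightarrow> 'a \<Rightarrow> complex" where
  "laplacian c v x = (\<Sum>y\<in>{y. adj c x y}. complex_of_real (c x y) * (v x - v y))"

definition Harm :: "('a \<Rightarrow> 'a \<Rightarrow> real) \<Rightarrow> ('a \<Rightarrow> complex) set" where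
  "Harm c = {v. finite_energy c v \<and> (\<forall>x. laplacian c v x = 0)}"

end

theory Submission
  imports Defs
begin

text \<open>
  Since \<open>b \<le> c\<close> pointwise, every energy term for \<open>b\<close> is dominated by the corresponding one
  for \<open>c\<close>; so finite \<open>c\<close>-energy implies finite \<open>b\<close>-energy and a finitely supported
  \<open>c\<close>-approximation is also a \<open>b\<close>-approximation, giving \<open>Fin c \<subseteq> Fin b\<close>.
  For the adjoint, testing the defining identity \<open>E\<^sub>c(w, u) = E\<^sub>b(v, u)\<close> on \<open>u = \<delta>\<^sub>x\<close>
  and using \<open>E(f, \<delta>\<^sub>x) = conj (\<Delta> f x)\<close> yields \<open>\<Delta>\<^sub>c w = \<Delta>\<^sub>b v = 0\<close>.
\<close>

lemma Re_energy_self: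
  assumes "finite_energy c w"
  shows "Re (energy c w w) = (1/2) * (\<Sum>\<^sub>\<infinity>(x, y). c x y * (cmod (w x - w y))\<^sup>2)"
proof -
  let ?f = "\<lambda>(x, y). c x y * (cmod (w x - w y))\<^sup>2"
  have summable: "?f summable_on UNIV" using assms unfolding finite_energy_def by simp
  have terms: "(\<lambda>(x, y). complex_of_real (c x y) * cnj (w x - w y) * (w x - w y))
        = (\<lambda>p. complex_of_real (?f p))"
  proof
    fix p :: "'a \<times> 'a"
    obtain x y where p: "p = (x, y)" by fastforce
    have "cnj (w x - w y) * (w x - w y) = complex_of_real ((cmod (w x - w y))\<^sup>2)"
      using complex_norm_square[of "w x - w y"] by (simp add: mult.commute)
    then show "(\<lambda>(x, y). complex_of_real (c x y) * cnj (w x - w y) * (w x - w y)) p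
        = complex_of_real (?f p)"
      by (simp add: p mult.assoc)
  qed
  have "infsum (\<lambda>p. complex_of_real (?f p)) UNIV = complex_of_real (infsum ?f UNIV)"
    by (intro infsumI has_sum_of_real) (use summable in auto)
  then show ?thesis unfolding energy_def terms by simp
qed

lemma
  assumes "conductance b" "\<And>x y. b x y \<le> c x y" "finite_energy c w"
  shows finite_energy_mono: "finite_energy b w"
    and Re_energy_self_mono: "Re (energy b w w) \<le> Re (energy c w w)"
proof -
  have b_nonneg: "\<And>x y. 0 \<le> b x y" using assms(1) unfolding conductance_def by auto
  let ?f = "\<lambda>(x, y). c x y * (cmod (w x - w y))\<^sup>2"
  let ?g = "\<lambda>(x, y). b x y * (cmod (w x - w y))\<^sup>2"
  have summable_f: "?f summable_on UNIV" using assms(3) unfolding finite_energy_def by simp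
  have le: "?g p \<le> ?f p" for p
    by (cases p) (auto intro!: mult_right_mono assms(2))
  have nonneg: "0 \<le> ?g p" for p
    by (cases p) (auto intro!: mult_nonneg_nonneg b_nonneg)
  have summable_g: "?g summable_on UNIV"
    by (rule summable_on_comparison_test[OF summable_f]) (use le nonneg in auto)
  then show fin_b: "finite_energy b w" unfolding finite_energy_def by simp
  have "infsum ?g UNIV \<le> infsum ?f UNIV"
    by (rule infsum_mono[OF summable_g summable_f]) (use le in auto)
  then show "Re (energy b w w) \<le> Re (energy c w w)"
    using Re_energy_self[OF fin_b] Re_energy_self[OF assms(3)] by simp
qed

lemma Fin_mono:
  assumes "conductance b" "\<And>x y. b x y \<le> c x y"
  shows "Fin c \<subseteq> Fin b"
proof
  fix u assume u: "u \<in> Fin c"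
  show "u \<in> Fin b"
    unfolding Fin_def
  proof (intro CollectI conjI allI impI)
    show "finite_energy b u" using u finite_energy_mono[OF assms] unfolding Fin_def by blast
    fix e :: real assume "e > 0"
    then obtain v where v: "finite {x. v x \<noteq> 0}" "finite_energy c (\<lambda>x. u x - v x)"
      "Re (energy c (\<lambda>x. u x - v x) (\<lambda>x. u x - v x)) < e"
      using u unfolding Fin_def by blast
    then show "\<exists>v. finite {x. v x \<noteq> 0} \<and> finite_energy b (\<lambda>x. u x - v x) \<and>
           Re (energy b (\<lambda>x. u x - v x) (\<lambda>x. u x - v x)) < e"
      using finite_energy_mono[OF assms] Re_energy_self_mono[OF assms] by force
  qed
qed

definition incident_edges :: "('a \<Rightarrow> 'a \<Rightarrow> real) \<Rightarrow> 'a \<Rightarrow> ('a \<times> 'a) set" where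
  "incident_edges c x = {x} \<times> {z. adj c x z} \<union> {z. adj c x z} \<times> {x}"

lemma finite_incident_edges:
  "locally_finite c \<Longrightarrow> finite (incident_edges c x)"
  unfolding incident_edges_def locally_finite_def by auto

text \<open>Outside the edges at \<open>x\<close>, every term \<open>c y z \<cdot> h (\<delta>\<^sub>x y - \<delta>\<^sub>x z)\<close> of an energy sum vanishes.\<close>

lemma delta_term_outside_incident_edges:
  assumes "conductance c" "(y, z) \<notin> incident_edges c x"
  shows "c y z = 0 \<or> (y = x \<longleftrightarrow> z = x)"
proof -
  have symm: "c y z = c z y" and nonneg: "0 \<le> c y z" "0 \<le> c z y"
    using assms(1) unfolding conductance_def by auto
  have "\<not> adj c x z" if "y = x" using that assms(2) unfolding incident_edges_def by auto
  moreover have "\<not> adj c x y" if "z = x" using that assms(2) unfolding incident_edges_def by auto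
  ultimately show ?thesis using symm nonneg unfolding adj_def by fastforce
qed

lemma finite_energy_delta:
  assumes "conductance c" "locally_finite c"
  shows "finite_energy c (\<lambda>y. if y = x then 1 else 0)"
proof -
  let ?g = "\<lambda>(y, z). c y z * (cmod ((if y = x then 1 else 0) - (if z = x then 1 else 0 :: complex)))\<^sup>2"
  have "?g summable_on incident_edges c x"
    using finite_incident_edges[OF assms(2)] by simp
  moreover have "?g p = 0" if "p \<notin> incident_edges c x" for p
    using that delta_term_outside_incident_edges[OF assms(1), of "fst p" "snd p" x]
    by (cases p) auto
  ultimately have "?g summable_on UNIV"
    by (subst summable_on_cong_neutral[where T = "incident_edges c x"]) auto
  then show ?thesis unfolding finite_energy_def by simp
qed

lemma energy_delta:
  assumes "conductance c" "locally_finite c"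
  shows "energy c f (\<lambda>y. if y = x then 1 else 0) = cnj (laplacian c f x)"
proof -
  let ?d = "\<lambda>y. if y = x then (1::complex) else 0"
  let ?g = "\<lambda>(y, z). complex_of_real (c y z) * cnj (f y - f z) * (?d y - ?d z)"
  define A where "A = {z. adj c x z}"
  have finite_A: "finite A" using assms(2) unfolding A_def locally_finite_def by auto
  have symm: "\<And>y z. c y z = c z y" and x_notin_A: "x \<notin> A"
    using assms(1) unfolding conductance_def A_def adj_def by auto
  have "infsum ?g UNIV = sum ?g (incident_edges c x)"
  proof -
    have "?g p = 0" if "p \<notin> incident_edges c x" for p
      using that delta_term_outside_incident_edges[OF assms(1), of "fst p" "snd p" x]
      by (cases p) auto
    then have "infsum ?g UNIV = infsum ?g (incident_edges c x)"
      by (intro infsum_cong_neutral) auto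
    then show ?thesis using finite_incident_edges[OF assms(2)] by simp
  qed
  also have "\<dots> = sum ?g ({x} \<times> A) + sum ?g (A \<times> {x})"
    unfolding incident_edges_def A_def[symmetric]
    by (rule sum.union_disjoint) (use finite_A x_notin_A in auto)
  also have "sum ?g ({x} \<times> A) = (\<Sum>z\<in>A. complex_of_real (c x z) * cnj (f x - f z))"
    by (subst sum.cartesian_product[symmetric]) (use x_notin_A in \<open>auto intro!: sum.cong\<close>)
  also have "sum ?g (A \<times> {x}) = (\<Sum>z\<in>A. complex_of_real (c x z) * cnj (f x - f z))"
    by (subst sum.cartesian_product[symmetric])
       (use x_notin_A symm in \<open>auto intro!: sum.cong simp: algebra_simps\<close>)
  finally have "energy c f ?d = (\<Sum>z\<in>A. complex_of_real (c x z) * cnj (f x - f z))"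
    unfolding energy_def by simp
  also have "\<dots> = cnj (laplacian c f x)"
    unfolding laplacian_def A_def by simp
  finally show ?thesis .
qed

lemma adjoint_preserves_harmonic:
  assumes "conductance c" "locally_finite c" "conductance b" "locally_finite b"
    and v: "v \<in> Harm b" and w: "finite_energy c w"
    and adjoint: "\<And>u. finite_energy c u \<Longrightarrow> energy c w u = energy b v u"
  shows "w \<in> Harm c"
  unfolding Harm_def
proof (intro CollectI conjI allI w)
  fix x
  have "cnj (laplacian c w x) = cnj (laplacian b v x)"
    using adjoint[OF finite_energy_delta[OF assms(1,2)]]
    by (simp add: energy_delta[OF assms(1,2)] energy_delta[OF assms(3,4)])
  then show "laplacian c w x = 0" using v unfolding Harm_def by simp
qed

theorem lemma3p4:
  fixes c b :: "'a::countable \<Rightarrow> 'a \<Rightarrow> real"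
  assumes "conductance c" and "conductance b"
    and "\<And>x y. b x y \<le> c x y"
    and "connected_net c" and "locally_finite c"
    and "connected_net b" and "locally_finite b"
  shows "Fin c \<subseteq> Fin b \<and>
         (\<forall>v w. v \<in> Harm b \<longrightarrow> finite_energy c w \<longrightarrow>
           (\<forall>u. finite_energy c u \<longrightarrow> energy c w u = energy b v u) \<longrightarrow> w \<in> Harm c)"
  using Fin_mono[OF assms(2,3)] adjoint_preserves_harmonic[OF assms(1,5,2,7)] by blast

end
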